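(* Suppose that every language satisfying the partial order condition belongs to $\mathbf{RMM}$. Then $\mathbf{RMM}$ is closed under intersection.
   Context: A DFA $(Q,\Sigma,\delta,q_0,F)$ satisfies the partial order condition if there do not exist two distinguishable states $q_1,q_2$ and strings $x,y\in\Sigma^+$ with $\delta(q_1,x)=\delta(q_2,x)=q_2$ and $\delta(q_2,y)=q_1$ (states are distinguishable if some $z\in\Sigma^*$ leads exactly one of them into $F$); a regular language satisfies it if its minimal DFA does. A measure-many quantum finite automaton (MM-QFA) over $\Sigma$ is a tuple $(Q,\Sigma,\{U_\sigma\}_{\sigma\in\Sigma\cup\{\$\}},q_0,Q_{acc},Q_{rej})$ with $Q$ finite indexing an orthonormal basis of $\mathbb{C}^Q$, end-marker $\$\notin\Sigma$, unitary $U_\sigma$, initial state $q_0$, and $Q$ partitioned into $Q_{acc},Q_{rej},Q_{non}$ with projections $P_{acc},P_{rej},P_{non}$ onto the corresponding spans. On input $x$ it processes $x\$$ maintaining $(\psi,p_{acc},p_{rej})$, initially $(|q_0\rangle,0,0)$; on reading $\sigma$: $\psi'=U_\sigma\psi$, $p_{acc}\mathrel{+}=\|P_{acc}\psi'\|^2$, $p_{rej}\mathrel{+}=\|P_{rej}\psi'\|^2$, $\psi\leftarrow P_{non}\psi'$; the acceptance probability is the final $p_{acc}$. $\mathbf{RMM}$ is the class of languages $L$ for which some MM-QFA and some $\lambda$, $\epsilon>0$ give acceptance probability $>\lambda+\epsilon$ on $x\in L$ and $<\lambda-\epsilon$ on $x\notin L$. *)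

theory Defs
  imports Complex_Main
begin

text \<open>Alphabet: a finite type 'a (Sigma = UNIV); strings are lists.
  A DFA with state set Q, total transition function delta, final states F.\<close>

definition dfa_run :: "('q \<Rightarrow> 'a \<Rightarrow> 'q) \<Rightarrow> 'q \<Rightarrow> 'a list \<Rightarrow> 'q" where
  "dfa_run delta q w = foldl delta q w"

definition dfa_distinguishable ::
  "('q \<Rightarrow> 'a \<Rightarrow> 'q) \<Rightarrow> 'q set \<Rightarrow> 'q \<Rightarrow> 'q \<Rightarrow> bool" where
  "dfa_distinguishable delta F q1 q2 \<longleftrightarrow>
     (\<exists>z. (dfa_run delta q1 z \<in> F) \<noteq> (dfa_run delta q2 z \<in> F))"

definition dfa_poc :: "'q set \<Rightarrow> ('q \<Rightarrow> 'a \<Rightarrow> 'q) \<Rightarrow> 'q set \<Rightarrow> bool" where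
  "dfa_poc Q delta F \<longleftrightarrow>
     \<not> (\<exists>q1\<in>Q. \<exists>q2\<in>Q. \<exists>x y. x \<noteq> [] \<and> y \<noteq> [] \<and>
           dfa_distinguishable delta F q1 q2 \<and>
           dfa_run delta q1 x = q2 \<and> dfa_run delta q2 x = q2 \<and>
           dfa_run delta q2 y = q1)"

text \<open>The minimal DFA of a language L (Myhill--Nerode): states are the left
  quotients u^{-1}L, start state L, transitions S -sigma-> sigma^{-1}S,
  final states those containing the empty word. L is regular iff there are
  finitely many quotients.\<close>

definition lquot :: "'a list set \<Rightarrow> 'a list \<Rightarrow> 'a list set" where
  "lquot L u = {w. u @ w \<in> L}"

definition min_dfa_states :: "'a list set \<Rightarrow> 'a list set set" where
  "min_dfa_states L = range (lquot L)"

definition min_dfa_delta :: "'a list set \<Rightarrow> 'a \<Rightarrow> 'a list set" where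
  "min_dfa_delta S \<sigma> = {w. \<sigma> # w \<in> S}"

definition min_dfa_final :: "'a list set set" where
  "min_dfa_final = {S. [] \<in> S}"

definition regular_lang :: "'a list set \<Rightarrow> bool" where
  "regular_lang L \<longleftrightarrow> finite (min_dfa_states L)"

definition poc_lang :: "'a list set \<Rightarrow> bool" where
  "poc_lang L \<longleftrightarrow> regular_lang L \<and>
     dfa_poc (min_dfa_states L) min_dfa_delta min_dfa_final"

text \<open>Basis states are {..<n}; a state vector is a function nat => complex
  (only indices < n matter). The input alphabet of the automaton is
  'a option, with None playing the role of the end-marker.\<close>

definition mat_vec :: "nat \<Rightarrow> (nat \<Rightarrow> nat \<Rightarrow> complex) \<Rightarrow> (nat \<Rightarrow> complex) \<Rightarrow> nat \<Rightarrow> complex" where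
  "mat_vec n U \<psi> = (\<lambda>i. \<Sum>j<n. U i j * \<psi> j)"

definition unitary_n :: "nat \<Rightarrow> (nat \<Rightarrow> nat \<Rightarrow> complex) \<Rightarrow> bool" where
  "unitary_n n U \<longleftrightarrow>
     (\<forall>i<n. \<forall>j<n. (\<Sum>k<n. cnj (U k i) * U k j) = (if i = j then 1 else 0))"

definition proj_norm2 :: "nat set \<Rightarrow> (nat \<Rightarrow> complex) \<Rightarrow> real" where
  "proj_norm2 P \<psi> = (\<Sum>i\<in>P. (cmod (\<psi> i))\<^sup>2)"

definition mmqfa_wf ::
  "nat \<Rightarrow> ('a option \<Rightarrow> nat \<Rightarrow> nat \<Rightarrow> complex) \<Rightarrow> nat \<Rightarrow> nat set \<Rightarrow> nat set \<Rightarrow> bool" where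
  "mmqfa_wf n U q0 Acc Rej \<longleftrightarrow>
     q0 < n \<and> Acc \<subseteq> {..<n} \<and> Rej \<subseteq> {..<n} \<and> Acc \<inter> Rej = {} \<and>
     (\<forall>\<sigma>. unitary_n n (U \<sigma>))"

definition mmqfa_step ::
  "nat \<Rightarrow> ('a option \<Rightarrow> nat \<Rightarrow> nat \<Rightarrow> complex) \<Rightarrow> nat set \<Rightarrow> nat set \<Rightarrow>
   (nat \<Rightarrow> complex) \<times> real \<times> real \<Rightarrow> 'a option \<Rightarrow> (nat \<Rightarrow> complex) \<times> real \<times> real" where
  "mmqfa_step n U Acc Rej st \<sigma> =
     (case st of (\<psi>, pa, pr) \<Rightarrow>
       (let \<psi>' = mat_vec n (U \<sigma>) \<psi>;
            Non = {..<n} - Acc - Rej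
        in ((\<lambda>i. if i \<in> Non then \<psi>' i else 0),
            pa + proj_norm2 Acc \<psi>',
            pr + proj_norm2 Rej \<psi>')))"

definition mmqfa_accept_prob ::
  "nat \<Rightarrow> ('a option \<Rightarrow> nat \<Rightarrow> nat \<Rightarrow> complex) \<Rightarrow> nat \<Rightarrow> nat set \<Rightarrow> nat set \<Rightarrow> 'a list \<Rightarrow> real" where
  "mmqfa_accept_prob n U q0 Acc Rej x =
     fst (snd (foldl (mmqfa_step n U Acc Rej)
                 ((\<lambda>i. if i = q0 then 1 else 0), 0, 0)
                 (map Some x @ [None])))"

definition RMM :: "'a list set set" where
  "RMM = {L. \<exists>n U q0 Acc Rej (lam::real) (\<epsilon>::real).
             mmqfa_wf n U q0 Acc Rej \<and> \<epsilon> > 0 \<and>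
             (\<forall>x. (x \<in> L \<longrightarrow> mmqfa_accept_prob n U q0 Acc Rej x > lam + \<epsilon>) \<and>
                  (x \<notin> L \<longrightarrow> mmqfa_accept_prob n U q0 Acc Rej x < lam - \<epsilon>))}"

end

theory Submission
  imports Defs "HOL-Analysis.L2_Norm" "HOL-Library.Function_Algebras"
begin

(* Every language recognised with bounded error by an MM-QFA is regular, and the intersection
  of two such languages satisfies the partial order condition; the hypothesis then puts the
  intersection back into RMM.

  Regularity: the acceptance probability of u z is a Lipschitz function of the (unnormalised)
  state reached after u and of the probability accepted so far, so words for which this pair
  falls into the same cell of a fine finite grid have the same quotient.

  Partial order condition: let q1 -x-> q2 -x-> q2 -y-> q1 in the minimal DFA of L1 \<inter> L2, with
  q1 \<noteq> q2 reached by u. Along the words u (x^t y)^m the state norms of both automata decrease,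
  so for some m one further period x^t y loses almost no norm. If t exceeds the number of pairs
  of grid cells, two powers x^s1, x^s2 with s1 < s2 \<le> t lead both automata to nearly equal
  states, and the parallelogram law shows that x^(s2 - s1) nearly fixes the states reached after
  A = u (x^t y)^m. So neither automaton separates A from A x^(s2 - s1), although A reaches q1 and
  A x^(s2 - s1) reaches q2. *)

section \<open>Coordinate vectors\<close>

definition norm_on :: "'i set \<Rightarrow> ('i \<Rightarrow> complex) \<Rightarrow> real" where
  "norm_on A v = L2_set (\<lambda>i. cmod (v i)) A"

lemma norm_on_nonneg [simp]: "0 \<le> norm_on A v"
  by (simp add: norm_on_def)

lemma norm_on_eq_sqrt: "norm_on A v = sqrt (proj_norm2 A v)"
  by (simp add: proj_norm2_def norm_on_def L2_set_def)

lemma proj_norm2_eq_norm_on: "finite A \<Longrightarrow> proj_norm2 A v = (norm_on A v)\<^sup>2"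
  by (simp add: proj_norm2_def norm_on_def L2_set_def sum_nonneg)

lemma proj_norm2_nonneg [simp]: "0 \<le> proj_norm2 A v"
  by (simp add: proj_norm2_def sum_nonneg)

lemma norm_on_triangle_ineq: "norm_on A (v + w) \<le> norm_on A v + norm_on A w"
proof -
  have "norm_on A (v + w) \<le> L2_set (\<lambda>i. cmod (v i) + cmod (w i)) A"
    unfolding norm_on_def by (rule L2_set_mono) (auto simp: norm_triangle_ineq)
  also have "\<dots> \<le> norm_on A v + norm_on A w"
    unfolding norm_on_def by (rule L2_set_triangle_ineq)
  finally show ?thesis .
qed

lemma norm_on_minus_commute: "norm_on A (v - w) = norm_on A (w - v)"
  by (simp add: norm_on_def norm_minus_commute)

lemma norm_on_triangle_ineq3: "\<bar>norm_on A v - norm_on A w\<bar> \<le> norm_on A (v - w)"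
  using norm_on_triangle_ineq[of A w "v - w"] norm_on_triangle_ineq[of A v "w - v"]
    norm_on_minus_commute[of A v w] by simp

lemma norm_on_double: "norm_on A (v + v) = 2 * norm_on A v"
proof -
  have "norm_on A (v + v) = L2_set (\<lambda>i. 2 * cmod (v i)) A"
    unfolding norm_on_def by (rule L2_set_cong) (auto simp flip: mult_2 simp: norm_mult)
  also have "\<dots> = 2 * norm_on A v"
    unfolding norm_on_def by (simp add: L2_set_right_distrib)
  finally show ?thesis .
qed

lemma cmod_le_norm_on: "finite A \<Longrightarrow> i \<in> A \<Longrightarrow> cmod (v i) \<le> norm_on A v"
  unfolding norm_on_def by (rule member_le_L2_set)

lemma norm_on_le_card_mult:
  assumes "\<And>i. i \<in> A \<Longrightarrow> cmod (v i) \<le> b"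
  shows "norm_on A v \<le> real (card A) * b"
proof -
  have "norm_on A v \<le> (\<Sum>i\<in>A. cmod (v i))"
    unfolding norm_on_def by (rule L2_set_le_sum) simp
  also have "\<dots> \<le> real (card A) * b"
    using sum_mono[of A "\<lambda>i. cmod (v i)" "\<lambda>_. b"] assms by simp
  finally show ?thesis .
qed

lemma proj_norm2_parallelogram:
  "proj_norm2 A (v - w) + proj_norm2 A (v + w) = 2 * proj_norm2 A v + 2 * proj_norm2 A w"
proof -
  have "(cmod (z - u))\<^sup>2 + (cmod (z + u))\<^sup>2 = 2 * (cmod z)\<^sup>2 + 2 * (cmod u)\<^sup>2" for z u :: complex
    unfolding cmod_power2 by (simp add: power2_diff power2_sum)
  then show ?thesis
    by (simp add: proj_norm2_def sum.distrib[symmetric] sum_distrib_left)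
qed

lemma abs_power2_diff_le:
  fixes x y d :: real
  assumes "\<bar>x - y\<bar> \<le> d" "0 \<le> x" "0 \<le> y"
  shows "\<bar>x\<^sup>2 - y\<^sup>2\<bar> \<le> d * (x + y)"
proof -
  have "x\<^sup>2 - y\<^sup>2 = (x - y) * (x + y)"
    by (simp add: power2_eq_square algebra_simps)
  then have "\<bar>x\<^sup>2 - y\<^sup>2\<bar> = \<bar>x - y\<bar> * (x + y)"
    using assms(2,3) by (simp add: abs_mult)
  also have "\<dots> \<le> d * (x + y)"
    using assms by (intro mult_right_mono) auto
  finally show ?thesis .
qed

lemma cauchy_schwarz_two:
  fixes x1 x2 y1 y2 :: real
  shows "x1 * y1 + x2 * y2 \<le> sqrt (x1\<^sup>2 + x2\<^sup>2) * sqrt (y1\<^sup>2 + y2\<^sup>2)"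
proof -
  have "(x1\<^sup>2 + x2\<^sup>2) * (y1\<^sup>2 + y2\<^sup>2) = (x1 * y1 + x2 * y2)\<^sup>2 + (x1 * y2 - x2 * y1)\<^sup>2"
    by (simp add: power2_eq_square algebra_simps)
  then have "(x1 * y1 + x2 * y2)\<^sup>2 \<le> (x1\<^sup>2 + x2\<^sup>2) * (y1\<^sup>2 + y2\<^sup>2)"
    by simp
  then show ?thesis
    by (simp add: real_le_rsqrt flip: real_sqrt_mult)
qed

definition grid_cell :: "real \<Rightarrow> 'i set \<Rightarrow> ('i \<Rightarrow> complex) \<Rightarrow> 'i \<Rightarrow> int \<times> int" where
  "grid_cell d I v = (\<lambda>i. if i \<in> I then (\<lfloor>Re (v i) / d\<rfloor>, \<lfloor>Im (v i) / d\<rfloor>) else (0, 0))"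

lemma floor_divide_eq_imp_dist_less:
  fixes a b d :: real
  assumes "0 < d" "\<lfloor>a / d\<rfloor> = \<lfloor>b / d\<rfloor>"
  shows "\<bar>a - b\<bar> < d"
proof -
  have "\<bar>a / d - b / d\<bar> < 1"
    using assms(2) by linarith
  then show ?thesis
    using assms(1) by (simp add: abs_divide flip: diff_divide_distrib)
qed

lemma grid_cell_eq_imp_norm_on_le:
  assumes "0 < d" "grid_cell d I v = grid_cell d I w"
  shows "norm_on I (v - w) \<le> real (card I) * (2 * d)"
proof (rule norm_on_le_card_mult)
  fix i assume "i \<in> I"
  then have "\<lfloor>Re (v i) / d\<rfloor> = \<lfloor>Re (w i) / d\<rfloor>" "\<lfloor>Im (v i) / d\<rfloor> = \<lfloor>Im (w i) / d\<rfloor>"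
    using fun_cong[OF assms(2), of i] by (auto simp: grid_cell_def)
  then have "\<bar>Re (v i - w i)\<bar> < d" "\<bar>Im (v i - w i)\<bar> < d"
    using floor_divide_eq_imp_dist_less[OF assms(1)] by auto
  then show "cmod ((v - w) i) \<le> 2 * d"
    using cmod_le[of "v i - w i"] by simp
qed

lemma finite_grid_cells:
  assumes "finite I"
  shows "finite (grid_cell d I ` {v. \<forall>i\<in>I. cmod (v i) \<le> 1})"
proof -
  define R where "R = {\<lfloor>- 1 / \<bar>d\<bar>\<rfloor> .. \<lfloor>1 / \<bar>d\<bar>\<rfloor>}"
  have floor_in_R: "\<lfloor>t / d\<rfloor> \<in> R" if "\<bar>t\<bar> \<le> 1" for t
  proof -
    have "\<bar>t / d\<bar> \<le> 1 / \<bar>d\<bar>"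
      using that by (simp add: abs_divide divide_right_mono)
    then have "- 1 / \<bar>d\<bar> \<le> t / d" "t / d \<le> 1 / \<bar>d\<bar>"
      unfolding abs_le_iff by auto
    then show ?thesis
      unfolding R_def by (auto intro: floor_mono)
  qed
  have "grid_cell d I v i \<in> R \<times> R" if "i \<in> I" "cmod (v i) \<le> 1" for v i
    using that floor_in_R abs_Re_le_cmod[of "v i"] abs_Im_le_cmod[of "v i"]
    by (simp add: grid_cell_def)
  then have "grid_cell d I ` {v. \<forall>i\<in>I. cmod (v i) \<le> 1}
      \<subseteq> {g. \<forall>i. (i \<in> I \<longrightarrow> g i \<in> R \<times> R) \<and> (i \<notin> I \<longrightarrow> g i = (0, 0))}"
    by (auto simp: grid_cell_def)
  moreover have "finite {g. \<forall>i. (i \<in> I \<longrightarrow> g i \<in> R \<times> R) \<and> (i \<notin> I \<longrightarrow> g i = (0, 0))}"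
    using assms by (intro finite_set_of_finite_funs) (auto simp: R_def)
  ultimately show ?thesis
    by (rule finite_subset)
qed

section \<open>Measure-many quantum automata\<close>

definition list_pow :: "'b list \<Rightarrow> nat \<Rightarrow> 'b list" where
  "list_pow x k = concat (replicate k x)"

lemma list_pow_0 [simp]: "list_pow x 0 = []"
  and list_pow_Suc [simp]: "list_pow x (Suc k) = x @ list_pow x k"
  by (simp_all add: list_pow_def)

lemma list_pow_add: "list_pow x (k + l) = list_pow x k @ list_pow x l"
  by (simp add: list_pow_def replicate_add)

lemma list_pow_Suc_right: "list_pow x (Suc k) = list_pow x k @ x"
  using list_pow_add[of x k 1] by simp

locale mmqfa =
  fixes n :: nat and U :: "'a option \<Rightarrow> nat \<Rightarrow> nat \<Rightarrow> complex" and q0 :: nat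
    and Acc Rej :: "nat set"
  assumes wf: "mmqfa_wf n U q0 Acc Rej"
begin

abbreviation vnorm :: "(nat \<Rightarrow> complex) \<Rightarrow> real" where
  "vnorm \<equiv> norm_on {..<n}"

abbreviation vnorm2 :: "(nat \<Rightarrow> complex) \<Rightarrow> real" where
  "vnorm2 \<equiv> proj_norm2 {..<n}"

definition Non :: "nat set" where
  "Non = {..<n} - Acc - Rej"

definition evolve :: "'a option \<Rightarrow> (nat \<Rightarrow> complex) \<Rightarrow> nat \<Rightarrow> complex" where
  "evolve \<sigma> = mat_vec n (U \<sigma>)"

definition step :: "'a option \<Rightarrow> (nat \<Rightarrow> complex) \<Rightarrow> nat \<Rightarrow> complex" where
  "step \<sigma> \<psi> = (\<lambda>i. if i \<in> Non then evolve \<sigma> \<psi> i else 0)"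

abbreviation run :: "'a option list \<Rightarrow> (nat \<Rightarrow> complex) \<Rightarrow> nat \<Rightarrow> complex" where
  "run \<equiv> fold step"

primrec acc_gain :: "'a option list \<Rightarrow> (nat \<Rightarrow> complex) \<Rightarrow> real" where
  "acc_gain [] \<psi> = 0"
| "acc_gain (\<sigma> # w) \<psi> = proj_norm2 Acc (evolve \<sigma> \<psi>) + acc_gain w (step \<sigma> \<psi>)"

definition init :: "nat \<Rightarrow> complex" where
  "init = (\<lambda>i. if i = q0 then 1 else 0)"

definition state :: "'a list \<Rightarrow> nat \<Rightarrow> complex" where
  "state u = run (map Some u) init"

definition acc_prefix :: "'a list \<Rightarrow> real" where
  "acc_prefix u = acc_gain (map Some u) init"

abbreviation accept_prob :: "'a list \<Rightarrow> real" where
  "accept_prob \<equiv> mmqfa_accept_prob n U q0 Acc Rej"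

lemma q0_less: "q0 < n"
  and Acc_subset: "Acc \<subseteq> {..<n}"
  and Rej_subset: "Rej \<subseteq> {..<n}"
  and Acc_Rej_disjoint: "Acc \<inter> Rej = {}"
  and unitary: "unitary_n n (U \<sigma>)"
  using wf by (auto simp: mmqfa_wf_def)

lemma finite_Acc [simp]: "finite Acc"
  and finite_Rej [simp]: "finite Rej"
  and finite_Non [simp]: "finite Non"
  using Acc_subset Rej_subset by (auto intro: finite_subset simp: Non_def)

lemma vnorm2_eq: "vnorm2 v = (vnorm v)\<^sup>2"
  by (simp add: proj_norm2_eq_norm_on)

lemma vnorm_le_iff_vnorm2_le: "vnorm v \<le> vnorm w \<longleftrightarrow> vnorm2 v \<le> vnorm2 w"
  by (simp add: vnorm2_eq power2_le_iff_abs_le)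

lemma evolve_diff: "evolve \<sigma> (v - w) = evolve \<sigma> v - evolve \<sigma> w"
  and evolve_add: "evolve \<sigma> (v + w) = evolve \<sigma> v + evolve \<sigma> w"
  by (simp_all add: evolve_def mat_vec_def fun_eq_iff algebra_simps sum_subtractf sum.distrib)

lemma step_diff: "step \<sigma> (v - w) = step \<sigma> v - step \<sigma> w"
  and step_add: "step \<sigma> (v + w) = step \<sigma> v + step \<sigma> w"
  by (simp_all add: step_def evolve_diff evolve_add fun_eq_iff)

lemma run_add: "run w (v + v') = run w v + run w v'"
  by (induction w arbitrary: v v') (simp_all add: step_add)

lemma vnorm2_evolve: "vnorm2 (evolve \<sigma> \<psi>) = vnorm2 \<psi>"
proof -
  let ?V = "U \<sigma>"
  have orth: "(\<Sum>i<n. cnj (?V i k) * ?V i j) = (if k = j then 1 else 0)" if "j < n" "k < n" for j k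
    using unitary[of \<sigma>] that by (simp add: unitary_n_def)
  have "complex_of_real (vnorm2 (evolve \<sigma> \<psi>)) = (\<Sum>i<n. evolve \<sigma> \<psi> i * cnj (evolve \<sigma> \<psi> i))"
    unfolding proj_norm2_def of_real_sum by (intro sum.cong refl) (rule complex_norm_square)
  also have "\<dots> = (\<Sum>i<n. \<Sum>j<n. \<Sum>k<n. (?V i j * \<psi> j) * (cnj (?V i k) * cnj (\<psi> k)))"
    unfolding evolve_def mat_vec_def by (simp only: cnj_sum complex_cnj_mult sum_product)
  also have "\<dots> = (\<Sum>j<n. \<Sum>k<n. \<Sum>i<n. \<psi> j * cnj (\<psi> k) * (cnj (?V i k) * ?V i j))"
    by (subst sum.swap, rule sum.cong[OF refl], subst sum.swap)
       (simp only: mult.assoc mult.commute mult.left_commute)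
  also have "\<dots> = (\<Sum>j<n. \<Sum>k<n. \<psi> j * cnj (\<psi> k) * (if k = j then 1 else 0))"
    by (simp only: sum_distrib_left[symmetric]) (simp add: orth)
  also have "\<dots> = (\<Sum>j<n. \<psi> j * cnj (\<psi> j))"
    by (simp add: if_distrib sum.delta cong: if_cong)
  also have "\<dots> = complex_of_real (vnorm2 \<psi>)"
    unfolding proj_norm2_def of_real_sum by (intro sum.cong refl) (rule complex_norm_square[symmetric])
  finally show ?thesis
    by (simp only: of_real_eq_iff)
qed

lemma vnorm2_split_step:
  "proj_norm2 Acc (evolve \<sigma> \<psi>) + proj_norm2 Rej (evolve \<sigma> \<psi>) + vnorm2 (step \<sigma> \<psi>) = vnorm2 \<psi>"
proof -
  define f where "f i = (cmod (evolve \<sigma> \<psi> i))\<^sup>2" for i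
  have parts: "{..<n} = Acc \<union> Rej \<union> Non" "Acc \<inter> Rej = {}" "(Acc \<union> Rej) \<inter> Non = {}"
    using Acc_subset Rej_subset Acc_Rej_disjoint by (auto simp: Non_def)
  have "vnorm2 (step \<sigma> \<psi>) = (\<Sum>i<n. if i \<in> Non then f i else 0)"
    unfolding proj_norm2_def f_def step_def by (intro sum.cong) auto
  also have "\<dots> = sum f ({..<n} \<inter> Non)"
    by (rule sum.inter_restrict[symmetric]) simp
  also have "{..<n} \<inter> Non = Non"
    by (auto simp: Non_def)
  finally have "vnorm2 (step \<sigma> \<psi>) = sum f Non" .
  moreover have "vnorm2 \<psi> = sum f {..<n}"
    using vnorm2_evolve[of \<sigma> \<psi>] by (simp add: proj_norm2_def f_def)
  moreover have "sum f {..<n} = sum f Acc + sum f Rej + sum f Non"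
    using parts by (simp add: sum.union_disjoint)
  ultimately show ?thesis
    by (simp add: proj_norm2_def f_def)
qed

lemma acc_step_le: "proj_norm2 Acc (evolve \<sigma> \<psi>) + vnorm2 (step \<sigma> \<psi>) \<le> vnorm2 \<psi>"
  using vnorm2_split_step[of \<sigma> \<psi>] proj_norm2_nonneg[of Rej "evolve \<sigma> \<psi>"] by linarith

lemma vnorm2_run_le: "vnorm2 (run w \<psi>) \<le> vnorm2 \<psi>"
proof (induction w arbitrary: \<psi>)
  case (Cons \<sigma> w)
  have "vnorm2 (run w (step \<sigma> \<psi>)) \<le> vnorm2 \<psi>"
    using Cons.IH[of "step \<sigma> \<psi>"] acc_step_le[of \<sigma> \<psi>] proj_norm2_nonneg[of Acc "evolve \<sigma> \<psi>"]
    by linarith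
  then show ?case
    by simp
qed simp

lemma vnorm_run_le: "vnorm (run w \<psi>) \<le> vnorm \<psi>"
  using vnorm2_run_le vnorm_le_iff_vnorm2_le by blast

lemma acc_gain_append: "acc_gain (w @ w') \<psi> = acc_gain w \<psi> + acc_gain w' (run w \<psi>)"
  by (induction w arbitrary: \<psi>) simp_all

lemma acc_gain_nonneg: "0 \<le> acc_gain w \<psi>"
  by (induction w arbitrary: \<psi>) simp_all

lemma acc_gain_le: "acc_gain w \<psi> \<le> vnorm2 \<psi> - vnorm2 (run w \<psi>)"
proof (induction w arbitrary: \<psi>)
  case (Cons \<sigma> w)
  show ?case
    using Cons.IH[of "step \<sigma> \<psi>"] acc_step_le[of \<sigma> \<psi>] by simp
qed simp

lemma acc_gain_lipschitz: "\<bar>acc_gain w a - acc_gain w b\<bar> \<le> vnorm (a - b) * (vnorm a + vnorm b)"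
proof (induction w arbitrary: a b)
  case (Cons \<sigma> w)
  have step_bound: "sqrt ((norm_on Acc (evolve \<sigma> v))\<^sup>2 + (vnorm (step \<sigma> v))\<^sup>2) \<le> vnorm v" for v
    using acc_step_le[of \<sigma> v] by (simp add: vnorm2_eq proj_norm2_eq_norm_on real_le_lsqrt)
  define x1 y1 z1 where "x1 = norm_on Acc (evolve \<sigma> (a - b))"
    and "y1 = norm_on Acc (evolve \<sigma> a)" and "z1 = norm_on Acc (evolve \<sigma> b)"
  define x2 y2 z2 where "x2 = vnorm (step \<sigma> (a - b))"
    and "y2 = vnorm (step \<sigma> a)" and "z2 = vnorm (step \<sigma> b)"
  have "\<bar>y1 - z1\<bar> \<le> x1"
    unfolding x1_def y1_def z1_def evolve_diff by (rule norm_on_triangle_ineq3)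
  then have acc_diff: "\<bar>proj_norm2 Acc (evolve \<sigma> a) - proj_norm2 Acc (evolve \<sigma> b)\<bar> \<le> x1 * (y1 + z1)"
    using abs_power2_diff_le[of y1 z1 x1] by (simp add: y1_def z1_def proj_norm2_eq_norm_on)
  have rest_diff: "\<bar>acc_gain w (step \<sigma> a) - acc_gain w (step \<sigma> b)\<bar> \<le> x2 * (y2 + z2)"
    unfolding x2_def y2_def z2_def step_diff by (rule Cons.IH)
  have "\<bar>acc_gain (\<sigma> # w) a - acc_gain (\<sigma> # w) b\<bar> \<le> x1 * y1 + x2 * y2 + (x1 * z1 + x2 * z2)"
    using acc_diff rest_diff by (simp add: algebra_simps)
  also have "\<dots> \<le> sqrt (x1\<^sup>2 + x2\<^sup>2) * sqrt (y1\<^sup>2 + y2\<^sup>2) + sqrt (x1\<^sup>2 + x2\<^sup>2) * sqrt (z1\<^sup>2 + z2\<^sup>2)"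
    by (intro add_mono cauchy_schwarz_two)
  also have "\<dots> \<le> vnorm (a - b) * (vnorm a + vnorm b)"
    unfolding distrib_left[symmetric] x1_def x2_def y1_def y2_def z1_def z2_def
    by (intro mult_mono add_mono step_bound) auto
  finally show ?case .
qed simp

lemma step_mmqfa_step:
  "mmqfa_step n U Acc Rej (\<psi>, p, r) \<sigma>
     = (step \<sigma> \<psi>, p + proj_norm2 Acc (evolve \<sigma> \<psi>), r + proj_norm2 Rej (evolve \<sigma> \<psi>))"
  unfolding mmqfa_step_def step_def evolve_def Non_def by (simp add: Let_def)

lemma foldl_mmqfa_step:
  "fst (foldl (mmqfa_step n U Acc Rej) (\<psi>, p, r) w) = run w \<psi>
   \<and> fst (snd (foldl (mmqfa_step n U Acc Rej) (\<psi>, p, r) w)) = p + acc_gain w \<psi>"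
  by (induction w arbitrary: \<psi> p r) (simp_all add: step_mmqfa_step add.assoc)

lemma accept_prob_append:
  "accept_prob (u @ z) = acc_prefix u + acc_gain (map Some z @ [None]) (state u)"
  using foldl_mmqfa_step[of init 0 0 "map Some (u @ z) @ [None]"]
  by (simp add: mmqfa_accept_prob_def acc_prefix_def state_def init_def acc_gain_append)

lemma state_append: "state (u @ v) = run (map Some v) (state u)"
  by (simp add: state_def)

lemma acc_prefix_append: "acc_prefix (u @ v) = acc_prefix u + acc_gain (map Some v) (state u)"
  by (simp add: acc_prefix_def state_def acc_gain_append)

lemma vnorm2_init: "vnorm2 init = 1"
proof -
  have "vnorm2 init = (\<Sum>i<n. if i = q0 then 1 else 0)"
    unfolding proj_norm2_def init_def by (intro sum.cong) auto
  then show ?thesis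
    using q0_less by simp
qed

lemma vnorm_state_le_1: "vnorm (state u) \<le> 1"
  using vnorm_run_le[of "map Some u" init] vnorm2_init
  by (simp add: state_def norm_on_eq_sqrt)

lemma acc_prefix_bounds: "0 \<le> acc_prefix u" "acc_prefix u \<le> 1"
  using acc_gain_nonneg[of "map Some u" init] acc_gain_le[of "map Some u" init] vnorm2_init
    proj_norm2_nonneg[of "{..<n}" "run (map Some u) init"]
  unfolding acc_prefix_def by linarith+

lemma accept_prob_append_diff_le:
  "\<bar>accept_prob (u @ z) - accept_prob (v @ z)\<bar>
     \<le> \<bar>acc_prefix u - acc_prefix v\<bar> + 2 * vnorm (state u - state v)"
proof -
  have "\<bar>acc_gain (map Some z @ [None]) (state u) - acc_gain (map Some z @ [None]) (state v)\<bar>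
      \<le> vnorm (state u - state v) * (vnorm (state u) + vnorm (state v))"
    by (rule acc_gain_lipschitz)
  also have "\<dots> \<le> vnorm (state u - state v) * 2"
    using vnorm_state_le_1[of u] vnorm_state_le_1[of v] by (intro mult_left_mono) auto
  finally show ?thesis
    unfolding accept_prob_append by linarith
qed

lemma acc_prefix_append_diff_le:
  "\<bar>acc_prefix (u @ v) - acc_prefix u\<bar> \<le> 2 * vnorm (state (u @ v) - state u)"
proof -
  let ?a = "vnorm (state (u @ v))" and ?b = "vnorm (state u)"
  have "\<bar>?a - ?b\<bar> \<le> vnorm (state (u @ v) - state u)"
    by (rule norm_on_triangle_ineq3)
  then have "\<bar>?a\<^sup>2 - ?b\<^sup>2\<bar> \<le> vnorm (state (u @ v) - state u) * (?a + ?b)"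
    by (intro abs_power2_diff_le) auto
  also have "\<dots> \<le> vnorm (state (u @ v) - state u) * 2"
    using vnorm_state_le_1[of u] vnorm_state_le_1[of "u @ v"] by (intro mult_left_mono) auto
  finally show ?thesis
    using acc_gain_nonneg[of "map Some v" "state u"] acc_gain_le[of "map Some v" "state u"]
    by (simp add: acc_prefix_append state_append vnorm2_eq)
qed

lemma vnorm2_state_append_le: "vnorm2 (state (u @ v)) \<le> vnorm2 (state u)"
  unfolding state_append by (rule vnorm2_run_le)

lemma vnorm_less_if_vnorm2_less: "vnorm2 v < e\<^sup>2 \<Longrightarrow> 0 < e \<Longrightarrow> vnorm v < e"
  using real_sqrt_less_mono[of "vnorm2 v" "e\<^sup>2"] by (simp add: norm_on_eq_sqrt)

definition state_cell :: "real \<Rightarrow> 'a list \<Rightarrow> nat \<Rightarrow> int \<times> int" where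
  "state_cell e u = grid_cell (e / (2 * (real n + 1))) {..<n} (state u)"

lemma finite_state_cells: "finite (range (state_cell e))"
proof -
  have "cmod (state u i) \<le> 1" if "i < n" for u i
    using cmod_le_norm_on[of "{..<n}" i "state u"] vnorm_state_le_1[of u] that by simp
  then have "range (state_cell e)
      \<subseteq> grid_cell (e / (2 * (real n + 1))) {..<n} ` {v. \<forall>i\<in>{..<n}. cmod (v i) \<le> 1}"
    by (auto simp: state_cell_def)
  then show ?thesis
    using finite_grid_cells[of "{..<n}"] finite_subset by blast
qed

lemma state_cell_eq_imp_close:
  assumes "0 < e" "state_cell e u = state_cell e v"
  shows "vnorm (state u - state v) < e"
proof -
  have "vnorm (state u - state v) \<le> real (card {..<n}) * (2 * (e / (2 * (real n + 1))))"
    using assms by (intro grid_cell_eq_imp_norm_on_le) (simp_all add: state_cell_def)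
  also have "\<dots> < e"
    using assms(1) by (simp add: field_simps)
  finally show ?thesis .
qed

text \<open>Since \<open>run w\<close> is a contraction, the hypotheses force \<open>a + \<phi>\<close> to be nearly twice as long as
  \<open>\<phi>\<close>; the parallelogram law then makes \<open>a - \<phi>\<close> short.\<close>

lemma run_almost_fixed:
  assumes "vnorm \<phi> \<le> 1" "vnorm2 a \<le> vnorm2 \<phi>"
    and loss: "vnorm2 \<phi> - vnorm2 (run w \<phi>) \<le> \<eta>"
    and close: "vnorm (run w a - run w \<phi>) \<le> \<delta>"
  shows "vnorm2 (a - \<phi>) \<le> 4 * \<eta> + 4 * \<delta>"
proof -
  define c where "c = vnorm (run w \<phi>)"
  have c: "0 \<le> c" "c \<le> 1"
    using vnorm_run_le[of w \<phi>] assms(1) by (auto simp: c_def)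
  have "0 \<le> \<delta>"
    using close norm_on_nonneg order_trans by blast
  have "2 * c \<le> vnorm (run w a + run w \<phi>) + vnorm (run w \<phi> - run w a)"
    using norm_on_triangle_ineq[of "{..<n}" "run w a + run w \<phi>" "run w \<phi> - run w a"]
    by (simp add: c_def flip: norm_on_double)
  also have "\<dots> \<le> vnorm (a + \<phi>) + \<delta>"
    using vnorm_run_le[of w "a + \<phi>"] close by (simp add: run_add norm_on_minus_commute)
  finally have long: "2 * c - \<delta> \<le> vnorm (a + \<phi>)"
    by simp
  have "4 * c\<^sup>2 - 4 * c * \<delta> \<le> vnorm2 (a + \<phi>)"
  proof (cases "0 \<le> 2 * c - \<delta>")
    case True
    then have "(2 * c - \<delta>)\<^sup>2 \<le> vnorm2 (a + \<phi>)"
      using long by (simp add: vnorm2_eq power_mono)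
    moreover have "4 * c\<^sup>2 - 4 * c * \<delta> \<le> (2 * c - \<delta>)\<^sup>2"
      by (simp add: power2_diff power_mult_distrib)
    ultimately show ?thesis
      by linarith
  next
    case False
    then have "4 * c\<^sup>2 - 4 * c * \<delta> \<le> 0"
      using c(1) by (simp add: power2_eq_square mult_left_mono)
    then show ?thesis
      using proj_norm2_nonneg[of "{..<n}" "a + \<phi>"] by linarith
  qed
  moreover have "c * \<delta> \<le> \<delta>"
    using c \<open>0 \<le> \<delta>\<close> mult_right_mono[of c 1 \<delta>] by simp
  moreover have "vnorm2 \<phi> - c\<^sup>2 \<le> \<eta>"
    using loss by (simp add: c_def vnorm2_eq)
  ultimately show ?thesis
    using proj_norm2_parallelogram[of "{..<n}" a \<phi>] assms(2) by linarith
qed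

lemma state_almost_returns:
  assumes "s1 < s2" "s2 \<le> t" "0 < \<eta>"
    and loss: "vnorm2 (state w) - vnorm2 (state (w @ list_pow x t @ y)) \<le> \<eta>"
    and cell: "state_cell \<eta> (w @ list_pow x s1) = state_cell \<eta> (w @ list_pow x s2)"
  shows "vnorm2 (state (w @ list_pow x (s2 - s1)) - state w) \<le> 8 * \<eta>"
proof -
  let ?M = "run (map Some (list_pow x s1))"
  have "list_pow x t @ y = list_pow x s1 @ list_pow x (t - s1) @ y"
    using assms(1,2) list_pow_add[of x s1 "t - s1"] by simp
  then have "vnorm2 (state (w @ list_pow x t @ y)) \<le> vnorm2 (state (w @ list_pow x s1))"
    using vnorm2_state_append_le[of "w @ list_pow x s1" "list_pow x (t - s1) @ y"] by simp
  then have "vnorm2 (state (w @ list_pow x t @ y)) \<le> vnorm2 (?M (state w))"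
    by (simp add: state_append)
  then have loss': "vnorm2 (state w) - vnorm2 (?M (state w)) \<le> \<eta>"
    using loss by linarith
  have "?M (state (w @ list_pow x (s2 - s1))) = state (w @ list_pow x s2)"
    using assms(1) list_pow_add[of x "s2 - s1" s1] by (simp add: state_append)
  then have "vnorm (?M (state (w @ list_pow x (s2 - s1))) - ?M (state w)) \<le> \<eta>"
    using state_cell_eq_imp_close[OF assms(3) cell]
      norm_on_minus_commute[of "{..<n}" "state (w @ list_pow x s1)"]
    by (simp add: state_append)
  from run_almost_fixed[OF vnorm_state_le_1 vnorm2_state_append_le loss' this]
  show ?thesis
    by simp
qed

end

section \<open>Two automata reading the same word\<close>

lemma pigeonhole_le_card:
  assumes "finite C" "\<And>s. s \<le> card C \<Longrightarrow> f s \<in> C"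
  obtains s1 s2 where "s1 < s2" "s2 \<le> card C" "f s1 = f s2"
proof -
  have "card (f ` {..card C}) \<le> card C"
    using assms by (intro card_mono) auto
  then have "\<not> inj_on f {..card C}"
    by (intro pigeonhole) simp
  then obtain a b where "a \<le> card C" "b \<le> card C" "a \<noteq> b" "f a = f b"
    by (auto simp: inj_on_def)
  then show ?thesis
    using that by (cases "a < b") (auto simp: not_less_iff_gr_or_eq)
qed

lemma decseq_small_step:
  fixes N :: "nat \<Rightarrow> real"
  assumes "decseq N" "\<And>m. b \<le> N m" "0 < \<eta>"
  obtains m where "N m - N (Suc m) < \<eta>"
proof -
  obtain l where "N \<longlonglongrightarrow> l"
    using decseq_convergent[of N b] assms(1,2) by blast
  then have "(\<lambda>m. N m - N (Suc m)) \<longlonglongrightarrow> l - l"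
    by (intro tendsto_diff LIMSEQ_Suc)
  then have "\<forall>\<^sub>F m in sequentially. N m - N (Suc m) < \<eta>"
    using assms(3) by (intro order_tendstoD) simp_all
  then show ?thesis
    using that by (auto dest: eventually_happens)
qed

locale mmqfa_pair =
  A: mmqfa n1 U1 q01 Acc1 Rej1 + B: mmqfa n2 U2 q02 Acc2 Rej2
  for n1 :: nat and U1 :: "'a option \<Rightarrow> nat \<Rightarrow> nat \<Rightarrow> complex" and q01 Acc1 Rej1
    and n2 :: nat and U2 :: "'a option \<Rightarrow> nat \<Rightarrow> nat \<Rightarrow> complex" and q02 Acc2 Rej2
begin

lemma common_small_period_loss:
  assumes "0 < \<eta>"
  obtains m where
    "A.vnorm2 (A.state (u @ list_pow p m)) - A.vnorm2 (A.state ((u @ list_pow p m) @ p)) \<le> \<eta>"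
    "B.vnorm2 (B.state (u @ list_pow p m)) - B.vnorm2 (B.state ((u @ list_pow p m) @ p)) \<le> \<eta>"
proof -
  define N where "N m = A.vnorm2 (A.state (u @ list_pow p m)) + B.vnorm2 (B.state (u @ list_pow p m))"
    for m
  have pow_Suc: "u @ list_pow p (Suc m) = (u @ list_pow p m) @ p" for m
    by (simp add: list_pow_Suc_right del: list_pow_Suc)
  have "decseq N"
    unfolding N_def
    by (intro decseq_SucI add_mono)
       (simp_all only: pow_Suc A.vnorm2_state_append_le B.vnorm2_state_append_le)
  then obtain m where "N m - N (Suc m) < \<eta>"
    using decseq_small_step[of N 0] assms by (auto simp: N_def)
  then show ?thesis
    using that[of m] A.vnorm2_state_append_le[of "u @ list_pow p m" p]
      B.vnorm2_state_append_le[of "u @ list_pow p m" p]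
    unfolding N_def pow_Suc by linarith
qed

lemma common_almost_return:
  assumes "0 < e"
  obtains t m k where "0 < t" "0 < k"
    "A.vnorm (A.state (u @ list_pow (list_pow x t @ y) m @ list_pow x k)
       - A.state (u @ list_pow (list_pow x t @ y) m)) < e"
    "B.vnorm (B.state (u @ list_pow (list_pow x t @ y) m @ list_pow x k)
       - B.state (u @ list_pow (list_pow x t @ y) m)) < e"
proof -
  define \<eta> where "\<eta> = e\<^sup>2 / 16"
  have "0 < \<eta>" "8 * \<eta> < e\<^sup>2"
    using assms by (simp_all add: \<eta>_def)
  define C where "C = range (A.state_cell \<eta>) \<times> range (B.state_cell \<eta>)"
  have "finite C"
    by (simp add: C_def A.finite_state_cells B.finite_state_cells)
  define t where "t = Suc (card C)"
  obtain m where
    loss_A: "A.vnorm2 (A.state (u @ list_pow (list_pow x t @ y) m))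
      - A.vnorm2 (A.state ((u @ list_pow (list_pow x t @ y) m) @ list_pow x t @ y)) \<le> \<eta>" and
    loss_B: "B.vnorm2 (B.state (u @ list_pow (list_pow x t @ y) m))
      - B.vnorm2 (B.state ((u @ list_pow (list_pow x t @ y) m) @ list_pow x t @ y)) \<le> \<eta>"
    using common_small_period_loss[OF \<open>0 < \<eta>\<close>] .
  define W where "W = u @ list_pow (list_pow x t @ y) m"
  obtain s1 s2 where s: "s1 < s2" "s2 \<le> card C"
    and cells: "(A.state_cell \<eta> (W @ list_pow x s1), B.state_cell \<eta> (W @ list_pow x s1))
      = (A.state_cell \<eta> (W @ list_pow x s2), B.state_cell \<eta> (W @ list_pow x s2))"
    using pigeonhole_le_card[OF \<open>finite C\<close>,
        of "\<lambda>s. (A.state_cell \<eta> (W @ list_pow x s), B.state_cell \<eta> (W @ list_pow x s))"]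
    by (auto simp: C_def)
  have "s2 \<le> t"
    using s by (simp add: t_def)
  have "A.vnorm2 (A.state (W @ list_pow x (s2 - s1)) - A.state W) < e\<^sup>2"
    and "B.vnorm2 (B.state (W @ list_pow x (s2 - s1)) - B.state W) < e\<^sup>2"
    using A.state_almost_returns[OF s(1) \<open>s2 \<le> t\<close> \<open>0 < \<eta>\<close>, of W]
      B.state_almost_returns[OF s(1) \<open>s2 \<le> t\<close> \<open>0 < \<eta>\<close>, of W]
      loss_A loss_B cells \<open>8 * \<eta> < e\<^sup>2\<close>
    by (fastforce simp: W_def)+
  then show ?thesis
    using that[of t "s2 - s1" m] s assms
    by (simp add: W_def t_def A.vnorm_less_if_vnorm2_less B.vnorm_less_if_vnorm2_less)
qed

end

section \<open>Quotients and the minimal DFA\<close>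

lemma lquot_Nil [simp]: "lquot L [] = L"
  by (simp add: lquot_def)

lemma lquot_lquot [simp]: "lquot (lquot L u) v = lquot L (u @ v)"
  by (simp add: lquot_def)

lemma lquot_Int: "lquot (L1 \<inter> L2) u = lquot L1 u \<inter> lquot L2 u"
  by (auto simp: lquot_def)

lemma regular_lang_Int: "regular_lang L1 \<Longrightarrow> regular_lang L2 \<Longrightarrow> regular_lang (L1 \<inter> L2)"
proof -
  assume "regular_lang L1" "regular_lang L2"
  then have "finite ((\<lambda>(S, T). S \<inter> T) ` (range (lquot L1) \<times> range (lquot L2)))"
    by (simp add: regular_lang_def min_dfa_states_def)
  moreover have "range (lquot (L1 \<inter> L2)) \<subseteq> (\<lambda>(S, T). S \<inter> T) ` (range (lquot L1) \<times> range (lquot L2))"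
    by (auto simp: lquot_Int)
  ultimately show ?thesis
    by (simp add: regular_lang_def min_dfa_states_def finite_subset)
qed

lemma dfa_run_min_dfa_delta: "dfa_run min_dfa_delta S w = lquot S w"
  by (induction w arbitrary: S) (simp_all add: dfa_run_def min_dfa_delta_def lquot_def)

lemma dfa_distinguishable_min_dfa_iff:
  "dfa_distinguishable min_dfa_delta min_dfa_final S T \<longleftrightarrow> S \<noteq> T"
  by (auto simp: dfa_distinguishable_def dfa_run_min_dfa_delta min_dfa_final_def lquot_def)

lemma lquot_list_pow_fixed: "lquot S x = S \<Longrightarrow> lquot S (list_pow x k) = S"
  by (induction k) (simp_all flip: lquot_lquot)

lemma lquot_list_pow_enter:
  "lquot S x = T \<Longrightarrow> lquot T x = T \<Longrightarrow> 0 < k \<Longrightarrow> lquot S (list_pow x k) = T"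
  by (cases k) (simp_all add: lquot_list_pow_fixed flip: lquot_lquot)

section \<open>Bounded-error recognition\<close>

locale mmqfa_recognizer = mmqfa n U q0 Acc Rej for n U q0 Acc Rej +
  fixes L :: "'a list set" and lam eps :: real
  assumes eps_pos: "0 < eps"
    and accepts: "x \<in> L \<Longrightarrow> lam + eps < accept_prob x"
    and rejects: "x \<notin> L \<Longrightarrow> accept_prob x < lam - eps"

lemma RMM_imp_recognizer:
  assumes "L \<in> RMM"
  obtains n U q0 Acc Rej lam eps where "mmqfa_recognizer n U q0 Acc Rej L lam eps"
  using assms unfolding RMM_def mmqfa_recognizer_def mmqfa_recognizer_axioms_def mmqfa_def
  by blast

context mmqfa_recognizer
begin

lemma lquot_eq_if_accept_prob_close:
  assumes "\<And>z. \<bar>accept_prob (u @ z) - accept_prob (v @ z)\<bar> < 2 * eps"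
  shows "lquot L u = lquot L v"
proof -
  have "u @ z \<in> L \<longleftrightarrow> v @ z \<in> L" for z
    using assms[of z] accepts[of "u @ z"] rejects[of "u @ z"] accepts[of "v @ z"] rejects[of "v @ z"]
    by (cases "u @ z \<in> L"; cases "v @ z \<in> L") (auto simp: abs_less_iff)
  then show ?thesis
    by (auto simp: lquot_def)
qed

lemma lquot_append_eq_if_state_close:
  assumes "vnorm (state (u @ v) - state u) < eps / 2"
  shows "lquot L (u @ v) = lquot L u"
proof (rule lquot_eq_if_accept_prob_close)
  fix z
  have "\<bar>accept_prob ((u @ v) @ z) - accept_prob (u @ z)\<bar>
      \<le> \<bar>acc_prefix (u @ v) - acc_prefix u\<bar> + 2 * vnorm (state (u @ v) - state u)"
    by (rule accept_prob_append_diff_le)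
  also have "\<dots> \<le> 4 * vnorm (state (u @ v) - state u)"
    using acc_prefix_append_diff_le[of u v] by linarith
  finally show "\<bar>accept_prob ((u @ v) @ z) - accept_prob (u @ z)\<bar> < 2 * eps"
    using assms by linarith
qed

lemma finite_lquots: "finite (range (lquot L))"
proof -
  define d where "d = eps / 2"
  have "0 < d"
    using eps_pos by (simp add: d_def)
  define key where "key u = (state_cell d u, \<lfloor>acc_prefix u / d\<rfloor>)" for u
  have key_determines: "lquot L u = lquot L v" if "key u = key v" for u v
  proof (rule lquot_eq_if_accept_prob_close)
    fix z
    have "\<bar>acc_prefix u - acc_prefix v\<bar> < d" "vnorm (state u - state v) < d"
      using that floor_divide_eq_imp_dist_less[OF \<open>0 < d\<close>] state_cell_eq_imp_close[OF \<open>0 < d\<close>]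
      by (auto simp: key_def)
    then show "\<bar>accept_prob (u @ z) - accept_prob (v @ z)\<bar> < 2 * eps"
      using accept_prob_append_diff_le[of u z v] unfolding d_def by linarith
  qed
  have "\<lfloor>acc_prefix u / d\<rfloor> \<in> {0 .. \<lfloor>1 / d\<rfloor>}" for u
  proof -
    have "0 \<le> acc_prefix u / d" "acc_prefix u / d \<le> 1 / d"
      using acc_prefix_bounds[of u] \<open>0 < d\<close> by (simp_all add: divide_right_mono)
    then show ?thesis
      by (auto intro: floor_mono)
  qed
  then have "range key \<subseteq> range (state_cell d) \<times> {0 .. \<lfloor>1 / d\<rfloor>}"
    by (auto simp: key_def)
  then have "finite (range key)"
    using finite_state_cells finite_subset by blast
  moreover have "lquot L u = lquot L (SOME v. key v = key u)" for u
    using key_determines someI[of "\<lambda>v. key v = key u" u] by metis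
  then have "range (lquot L) \<subseteq> (\<lambda>k. lquot L (SOME v. key v = k)) ` range key"
    by blast
  ultimately show ?thesis
    using finite_surj by blast
qed

end

lemma RMM_imp_regular: "L \<in> RMM \<Longrightarrow> regular_lang L"
  by (metis RMM_imp_recognizer mmqfa_recognizer.finite_lquots regular_lang_def min_dfa_states_def)

lemma RMM_Int_lquot_cycle:
  assumes "L1 \<in> RMM" "L2 \<in> RMM"
    and cycle: "lquot (L1 \<inter> L2) (u @ x) = q" "lquot q x = q" "lquot q y = lquot (L1 \<inter> L2) u"
  shows "q = lquot (L1 \<inter> L2) u"
proof -
  obtain n1 U1 q01 Acc1 Rej1 lam1 eps1 where "mmqfa_recognizer n1 U1 q01 Acc1 Rej1 L1 lam1 eps1"
    using assms(1) by (rule RMM_imp_recognizer)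
  then interpret R1: mmqfa_recognizer n1 U1 q01 Acc1 Rej1 L1 lam1 eps1 .
  obtain n2 U2 q02 Acc2 Rej2 lam2 eps2 where "mmqfa_recognizer n2 U2 q02 Acc2 Rej2 L2 lam2 eps2"
    using assms(2) by (rule RMM_imp_recognizer)
  then interpret R2: mmqfa_recognizer n2 U2 q02 Acc2 Rej2 L2 lam2 eps2 .
  interpret mmqfa_pair n1 U1 q01 Acc1 Rej1 n2 U2 q02 Acc2 Rej2 ..
  let ?L = "L1 \<inter> L2"
  have "0 < min eps1 eps2 / 2"
    using R1.eps_pos R2.eps_pos by simp
  then obtain t m k where "0 < t" "0 < k"
    and close1: "R1.vnorm (R1.state (u @ list_pow (list_pow x t @ y) m @ list_pow x k)
       - R1.state (u @ list_pow (list_pow x t @ y) m)) < min eps1 eps2 / 2"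
    and close2: "R2.vnorm (R2.state (u @ list_pow (list_pow x t @ y) m @ list_pow x k)
       - R2.state (u @ list_pow (list_pow x t @ y) m)) < min eps1 eps2 / 2"
    by (rule common_almost_return)
  let ?A = "u @ list_pow (list_pow x t @ y) m"
  have "lquot (lquot ?L u) (list_pow x t @ y) = lquot ?L u"
    using lquot_list_pow_enter[of "lquot ?L u" x q t] cycle \<open>0 < t\<close> by (simp flip: lquot_lquot)
  then have A: "lquot ?L ?A = lquot ?L u"
    using lquot_list_pow_fixed[of "lquot ?L u" "list_pow x t @ y" m] by simp
  have "lquot ?L (?A @ list_pow x k) = lquot (lquot ?L ?A) (list_pow x k)"
    by simp
  also have "\<dots> = lquot (lquot ?L u) (list_pow x k)"
    by (simp only: A)
  also have "\<dots> = q"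
    using lquot_list_pow_enter[of "lquot ?L u" x q k] cycle \<open>0 < k\<close> by simp
  finally have "lquot ?L (?A @ list_pow x k) = q" .
  moreover have "lquot ?L (?A @ list_pow x k) = lquot ?L ?A"
    using R1.lquot_append_eq_if_state_close[of ?A "list_pow x k"]
      R2.lquot_append_eq_if_state_close[of ?A "list_pow x k"] close1 close2
    by (simp add: lquot_Int)
  ultimately show ?thesis
    using A by metis
qed

lemma RMM_Int_min_dfa_poc:
  assumes "L1 \<in> RMM" "L2 \<in> RMM"
  shows "dfa_poc (min_dfa_states (L1 \<inter> L2)) min_dfa_delta min_dfa_final"
  unfolding dfa_poc_def dfa_run_min_dfa_delta dfa_distinguishable_min_dfa_iff
proof
  assume "\<exists>q1\<in>min_dfa_states (L1 \<inter> L2). \<exists>q2\<in>min_dfa_states (L1 \<inter> L2). \<exists>x y.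
    x \<noteq> [] \<and> y \<noteq> [] \<and> q1 \<noteq> q2 \<and> lquot q1 x = q2 \<and> lquot q2 x = q2 \<and> lquot q2 y = q1"
  then obtain q1 q2 x y where "q1 \<in> min_dfa_states (L1 \<inter> L2)" "q1 \<noteq> q2"
    and cycle: "lquot q1 x = q2" "lquot q2 x = q2" "lquot q2 y = q1"
    by blast
  moreover obtain u where "q1 = lquot (L1 \<inter> L2) u"
    using calculation(1) by (auto simp: min_dfa_states_def)
  ultimately show False
    using RMM_Int_lquot_cycle[OF assms, of u x q2 y] by simp
qed

theorem theorem4p6:
  assumes "\<forall>L :: 'a::finite list set. poc_lang L \<longrightarrow> L \<in> RMM"
  shows "\<forall>L1 L2 :: 'a list set. L1 \<in> RMM \<longrightarrow> L2 \<in> RMM \<longrightarrow> L1 \<inter> L2 \<in> RMM"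
proof (intro allI impI)
  fix L1 L2 :: "'a list set"
  assume "L1 \<in> RMM" "L2 \<in> RMM"
  then have "poc_lang (L1 \<inter> L2)"
    by (simp add: poc_lang_def regular_lang_Int RMM_imp_regular RMM_Int_min_dfa_poc)
  with assms show "L1 \<inter> L2 \<in> RMM"
    by blast
qed

end
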